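(* Let $G$ be a locally compact group with Haar measure $\nu$, and let $U$ be an open symmetric relatively compact neighborhood of the identity. Let $C\subseteq G$ be a regular compact set with interior $C_0$, and suppose $C_0$ is $U$-connected. If $A\subseteq G$ satisfies $A\cap C_0\neq\emptyset$ and $C\setminus\overline A\neq\emptyset$, then $\nu(\overline A\cap C)<\nu(AU\cap C)$.
   Context: A compact set is regular if it equals the closure of its interior. $\overline A$ is the closure of $A$. A set $S\subseteq G$ is $U$-disconnected if there is $A\subseteq S$ with $A\neq\emptyset$, $A\neq S$ and $AU\cap S=A$; otherwise $S$ is $U$-connected. *)

theory Defs
  imports "HOL-Analysis.Analysis"
begin

text \<open>The group is written additively (class group_add, not assumed commutative):
  the group product g h is g + h, the identity is 0, inverses are uminus.\<close>

definition setprod :: "'a::plus set \<Rightarrow> 'a set \<Rightarrow> 'a set" where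
  "setprod A U = {a + u | a u. a \<in> A \<and> u \<in> U}"

definition U_disconnected :: "'a::plus set \<Rightarrow> 'a set \<Rightarrow> bool" where
  "U_disconnected U S \<longleftrightarrow>
     (\<exists>A. A \<subseteq> S \<and> A \<noteq> {} \<and> A \<noteq> S \<and> setprod A U \<inter> S = A)"

definition U_connected :: "'a::plus set \<Rightarrow> 'a set \<Rightarrow> bool" where
  "U_connected U S \<longleftrightarrow> \<not> U_disconnected U S"

definition regular_compact :: "'a::topological_space set \<Rightarrow> bool" where
  "regular_compact C \<longleftrightarrow> compact C \<and> C = closure (interior C)"

definition haar_measure :: "'a::{topological_group_add} measure \<Rightarrow> bool" where
  "haar_measure \<nu> \<longleftrightarrow>
     sets \<nu> = sets borel \<and>
     (\<forall>g B. B \<in> sets borel \<longrightarrow> emeasure \<nu> ((\<lambda>x. g + x) ` B) = emeasure \<nu> B) \<and>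
     (\<forall>K. compact K \<longrightarrow> emeasure \<nu> K < \<infinity>) \<and>
     (\<forall>B \<in> sets borel. emeasure \<nu> B = (INF V \<in> {V. open V \<and> B \<subseteq> V}. emeasure \<nu> V)) \<and>
     (\<forall>V. open V \<longrightarrow> emeasure \<nu> V = (SUP K \<in> {K. compact K \<and> K \<subseteq> V}. emeasure \<nu> K)) \<and>
     emeasure \<nu> (space \<nu>) \<noteq> 0"

end

theory Submission
  imports Defs
begin

text \<open>Write \<open>S = interior C\<close>. The set \<open>AU\<close> is open and contains \<open>closure A\<close>, since \<open>U\<close> is a
  symmetric open neighbourhood of \<open>0\<close>. If \<open>AU \<inter> S\<close> were contained in \<open>closure A\<close>, then
  \<open>X = closure A \<inter> S\<close> would satisfy \<open>XU \<inter> S = X\<close>, because \<open>XU \<subseteq> closure (AU)\<close> and \<open>S\<close> is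
  open; as \<open>X\<close> is neither empty nor all of \<open>S\<close> (by regularity of \<open>C\<close>), this contradicts the
  \<open>U\<close>-connectedness of \<open>S\<close>. Hence \<open>AU \<inter> S - closure A\<close> is a nonempty open subset of \<open>C\<close>
  disjoint from \<open>closure A \<inter> C\<close>, and it has positive Haar measure, while \<open>closure A \<inter> C\<close> has
  finite measure because \<open>C\<close> is compact.\<close>

lemma setprod_eq_UN: "setprod A U = (\<Union>a\<in>A. (+) a ` U)"
  unfolding setprod_def by blast

lemma open_image_plus_left:
  fixes S :: "'a::topological_group_add set"
  assumes "open S"
  shows "open ((+) g ` S)"
proof -
  have "(+) g ` S = (+) (- g) -` S"
    by (force simp: add.assoc[symmetric])
  then show ?thesis
    using assms by (simp add: open_vimage continuous_intros)
qed

lemma open_setprod: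
  fixes U :: "'a::topological_group_add set"
  assumes "open U"
  shows "open (setprod A U)"
  unfolding setprod_eq_UN using open_image_plus_left[OF assms] by blast

lemma setprod_closure_subset:
  fixes A :: "'a::topological_monoid_add set"
  shows "setprod (closure A) U \<subseteq> closure (setprod A U)"
proof
  fix y assume "y \<in> setprod (closure A) U"
  then obtain x u where "x \<in> closure A" "u \<in> U" "y = x + u"
    unfolding setprod_def by blast
  have "(\<lambda>z. z + u) ` closure A \<subseteq> closure ((\<lambda>z. z + u) ` A)"
    by (intro image_closure_subset continuous_intros closure_subset image_mono) simp
  also have "\<dots> \<subseteq> closure (setprod A U)"
    using \<open>u \<in> U\<close> unfolding setprod_def by (intro closure_mono) blast
  finally show "y \<in> closure (setprod A U)"
    using \<open>x \<in> closure A\<close> \<open>y = x + u\<close> by blast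
qed

lemma closure_subset_setprod_uminus:
  fixes U :: "'a::topological_group_add set"
  assumes "open U" "0 \<in> U"
  shows "closure A \<subseteq> setprod A (uminus ` U)"
proof
  fix x assume "x \<in> closure A"
  moreover have "open ((+) x ` U)" "x \<in> (+) x ` U"
    using assms open_image_plus_left by force+
  ultimately have "A \<inter> (+) x ` U \<noteq> {}"
    unfolding closure_iff_nhds_not_empty by blast
  then obtain u where "u \<in> U" "x + u \<in> A" by blast
  moreover have "x = (x + u) + - u" by (simp add: add.assoc)
  ultimately show "x \<in> setprod A (uminus ` U)"
    unfolding setprod_def by blast
qed

lemma U_connected_setprod_not_subset_closure:
  fixes S :: "'a::topological_monoid_add set"
  assumes "U_connected U S" "open S" "0 \<in> U"
    and "A \<inter> S \<noteq> {}" "\<not> S \<subseteq> closure A"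
  shows "\<not> setprod A U \<inter> S \<subseteq> closure A"
proof
  assume AU: "setprod A U \<inter> S \<subseteq> closure A"
  define X where "X = closure A \<inter> S"
  have "X \<subseteq> setprod X U \<inter> S"
  proof
    fix x assume "x \<in> X"
    then show "x \<in> setprod X U \<inter> S"
      using \<open>0 \<in> U\<close> unfolding setprod_def X_def by (force intro: exI[of _ 0])
  qed
  moreover have "setprod X U \<inter> S \<subseteq> X"
  proof -
    have "setprod X U \<inter> S \<subseteq> S \<inter> closure (setprod A U)"
      using setprod_closure_subset[of A U] unfolding X_def setprod_def by blast
    also have "\<dots> \<subseteq> closure (S \<inter> setprod A U)"
      using \<open>open S\<close> by (rule open_Int_closure_subset)
    also have "\<dots> \<subseteq> closure A"
      using AU by (simp add: Int_commute closure_minimal)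
    finally show ?thesis
      unfolding X_def by blast
  qed
  moreover have "X \<noteq> {}" "X \<noteq> S"
    using assms(4,5) closure_subset unfolding X_def by blast+
  ultimately have "U_disconnected U S"
    unfolding U_disconnected_def X_def by blast
  then show False
    using assms(1) unfolding U_connected_def by blast
qed

lemma haar_measure_sets: "haar_measure \<nu> \<Longrightarrow> sets \<nu> = sets borel"
  unfolding haar_measure_def by (elim conjE)

lemma haar_measure_translate:
  "haar_measure \<nu> \<Longrightarrow> B \<in> sets borel \<Longrightarrow> emeasure \<nu> ((+) g ` B) = emeasure \<nu> B"
  unfolding haar_measure_def by (elim conjE) (erule allE, erule allE, erule mp)

lemma haar_measure_compact_finite: "haar_measure \<nu> \<Longrightarrow> compact K \<Longrightarrow> emeasure \<nu> K < \<infinity>"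
  unfolding haar_measure_def by (elim conjE) (erule allE, erule mp)

lemma haar_measure_inner_regular_open:
  "haar_measure \<nu> \<Longrightarrow> open V \<Longrightarrow> emeasure \<nu> V = (SUP K \<in> {K. compact K \<and> K \<subseteq> V}. emeasure \<nu> K)"
  unfolding haar_measure_def by (elim conjE) (erule allE, erule mp)

lemma haar_measure_UNIV_nonzero:
  assumes "haar_measure \<nu>"
  shows "emeasure \<nu> UNIV \<noteq> 0"
proof -
  have "space \<nu> = UNIV"
    using sets_eq_imp_space_eq[OF haar_measure_sets[OF assms]] by simp
  moreover have "emeasure \<nu> (space \<nu>) \<noteq> 0"
    using assms unfolding haar_measure_def by (elim conjE)
  ultimately show ?thesis by simp
qed

lemma haar_measure_open_pos:
  fixes \<nu> :: "'a::topological_group_add measure"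
  assumes "haar_measure \<nu>" "open W" "W \<noteq> {}"
  shows "0 < emeasure \<nu> W"
proof (rule ccontr)
  assume "\<not> 0 < emeasure \<nu> W"
  then have W0: "emeasure \<nu> W = 0" by simp
  have "emeasure \<nu> UNIV = (SUP K \<in> {K. compact K \<and> K \<subseteq> UNIV}. emeasure \<nu> K)"
    using assms(1) open_UNIV by (rule haar_measure_inner_regular_open)
  then have "(SUP K \<in> {K. compact K \<and> K \<subseteq> UNIV}. emeasure \<nu> K) \<noteq> 0"
    using haar_measure_UNIV_nonzero[OF assms(1)] by simp
  then obtain K where K: "compact K" "emeasure \<nu> K \<noteq> 0"
    by (metis (mono_tags, lifting) SUP_bot_conv(1) bot_ennreal mem_Collect_eq)
  obtain w where "w \<in> W" using assms(3) by blast
  have "K \<subseteq> (\<Union>k\<in>K. (+) (k - w) ` W)"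
    using \<open>w \<in> W\<close> by (force simp: image_iff)
  then obtain F where "finite F" and KF: "K \<subseteq> (\<Union>k\<in>F. (+) (k - w) ` W)"
    using compactE_image[OF \<open>compact K\<close>] open_image_plus_left[OF assms(2)] by metis
  have "(+) g ` W \<in> null_sets \<nu>" for g
    using haar_measure_translate[OF assms(1)] haar_measure_sets[OF assms(1)] W0
      open_image_plus_left[OF assms(2)] assms(2)
    unfolding null_sets_def by simp
  then have "(\<Union>k\<in>F. (+) (k - w) ` W) \<in> null_sets \<nu>"
    using \<open>finite F\<close> by blast
  moreover have "K \<in> sets \<nu>"
    using K(2) emeasure_notin_sets by blast
  ultimately have "emeasure \<nu> K = 0"
    using KF null_sets_subset by blast
  then show False
    using K(2) by simp
qed

lemma emeasure_less_of_disjoint_pos: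
  assumes "B \<in> sets M" "W \<in> sets M" "D \<in> sets M"
    and "B \<inter> W = {}" "B \<union> W \<subseteq> D"
    and "emeasure M B < \<infinity>" "0 < emeasure M W"
  shows "emeasure M B < emeasure M D"
proof -
  have "emeasure M B < emeasure M B + emeasure M W"
    using assms(6,7) ennreal_add_left_cancel_less[of "emeasure M B" 0] by simp
  also have "\<dots> = emeasure M (B \<union> W)"
    using assms(1,2,4) by (rule plus_emeasure)
  also have "\<dots> \<le> emeasure M D"
    using assms(1-3,5) by (intro emeasure_mono) auto
  finally show ?thesis .
qed

lemma haar_measure_Int_compact_less:
  fixes \<nu> :: "'a::{topological_group_add, t2_space} measure"
  assumes "haar_measure \<nu>" "compact C" "closed B" "open D" "B \<subseteq> D"
    and "open W" "W \<noteq> {}" "W \<subseteq> D \<inter> C - B"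
  shows "emeasure \<nu> (B \<inter> C) < emeasure \<nu> (D \<inter> C)"
proof (rule emeasure_less_of_disjoint_pos)
  have sets: "sets \<nu> = sets borel"
    using assms(1) by (rule haar_measure_sets)
  then have C_sets: "C \<in> sets \<nu>"
    using compact_imp_closed[OF assms(2)] by simp
  then show "B \<inter> C \<in> sets \<nu>" "W \<in> sets \<nu>" "D \<inter> C \<in> sets \<nu>"
    using assms(3,4,6) sets by auto
  show "B \<inter> C \<inter> W = {}" "B \<inter> C \<union> W \<subseteq> D \<inter> C"
    using assms(5,8) by auto
  have "emeasure \<nu> (B \<inter> C) \<le> emeasure \<nu> C"
    using C_sets by (intro emeasure_mono) auto
  also have "\<dots> < \<infinity>"
    using assms(1,2) by (rule haar_measure_compact_finite)
  finally show "emeasure \<nu> (B \<inter> C) < \<infinity>" .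
  show "0 < emeasure \<nu> W"
    using assms(1,6,7) by (rule haar_measure_open_pos)
qed

theorem lemma8:
  fixes \<nu> :: "'a::{topological_group_add, t2_space} measure"
    and U C A :: "'a set"
  assumes "locally_compact_space (euclidean :: 'a topology)"
    and "haar_measure \<nu>"
    and "open U" and "uminus ` U = U" and "compact (closure U)" and "0 \<in> U"
    and "regular_compact C"
    and "U_connected U (interior C)"
    and "A \<inter> interior C \<noteq> {}"
    and "C - closure A \<noteq> {}"
  shows "emeasure \<nu> (closure A \<inter> C) < emeasure \<nu> (setprod A U \<inter> C)"
proof -
  have C: "compact C" "C = closure (interior C)"
    using assms(7) unfolding regular_compact_def by auto
  have "\<not> interior C \<subseteq> closure A"
    using assms(10) C(2) closure_minimal by blast
  then have "setprod A U \<inter> interior C - closure A \<noteq> {}"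
    using U_connected_setprod_not_subset_closure assms(6,8,9) by blast
  moreover have "closure A \<subseteq> setprod A U"
    using closure_subset_setprod_uminus[OF assms(3,6)] assms(4) by simp
  moreover have "open (setprod A U)"
    using assms(3) by (rule open_setprod)
  ultimately show ?thesis
    using haar_measure_Int_compact_less[OF assms(2) C(1), of "closure A" "setprod A U"
        "setprod A U \<inter> interior C - closure A"] interior_subset[of C]
    by blast
qed

end
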